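(* (i) If $X$ is a real Banach space with a shrinking 1-unconditional finite-dimensional decomposition, then $X$ has property (au$^*$). (ii) If $Y$ is a separable real Banach space with property (au$^*$), then every closed subspace $X$ of $Y$ and every quotient $Y/Z$ of $Y$ by a closed subspace $Z$ has property (au$^*$).
   Context: All Banach spaces are real. A separable Banach space $X$ has property (au$^*$) if $\lim_{n\to\infty}(\|x^*+x_n^*\|-\|x^*-x_n^*\|)=0$ whenever $x^*\in X^*$ and $(x_n^* )_{n\ge1}$ is a weak$^*$-null sequence in $X^*$. A finite-dimensional decomposition (FDD) of $Y$ is a sequence of finite-rank projections $(Q_j)_{j\ge1}$ with $Q_iQ_j=0$ for $i\ne j$ and $y=\sum_j Q_jy$ for all $y\in Y$; it is a 1-unconditional FDD (1-UFDD) if $\|\sum_{j=1}^n\epsilon_jQ_jy\|\le\|y\|$ for all $y$, all $n$ and all signs $\epsilon_j=\pm1$ (so the series converge unconditionally); it is shrinking if $x^*=\sum_j Q_j^*x^*$ in norm for every $x^*\in Y^*$. *)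

theory Defs
  imports "HOL-Analysis.Analysis"
begin

definition weak_star_null :: "(nat \<Rightarrow> ('a::real_normed_vector \<Rightarrow>\<^sub>L real)) \<Rightarrow> bool" where
  "weak_star_null f \<longleftrightarrow> (\<forall>x. (\<lambda>n. blinfun_apply (f n) x) \<longlonglongrightarrow> 0)"

definition au_star :: "'a::real_normed_vector itself \<Rightarrow> bool" where
  "au_star (_::'a itself) \<longleftrightarrow>
     separable_space (euclidean :: 'a topology) \<and>
     (\<forall>(xs::'a \<Rightarrow>\<^sub>L real) (xn::nat \<Rightarrow> ('a \<Rightarrow>\<^sub>L real)).
        weak_star_null xn \<longrightarrow>
        (\<lambda>n. norm (xs + xn n) - norm (xs - xn n)) \<longlonglongrightarrow> 0)"

text \<open>Finite-dimensional decomposition (indexed from 0).\<close>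

definition is_FDD :: "(nat \<Rightarrow> ('a::real_normed_vector \<Rightarrow>\<^sub>L 'a)) \<Rightarrow> bool" where
  "is_FDD Q \<longleftrightarrow>
     (\<forall>j. Q j o\<^sub>L Q j = Q j) \<and>
     (\<forall>j. \<exists>B. finite B \<and> range (blinfun_apply (Q j)) \<subseteq> span B) \<and>
     (\<forall>i j. i \<noteq> j \<longrightarrow> Q i o\<^sub>L Q j = 0) \<and>
     (\<forall>y. (\<lambda>j. Q j y) sums y)"

definition is_1UFDD :: "(nat \<Rightarrow> ('a::real_normed_vector \<Rightarrow>\<^sub>L 'a)) \<Rightarrow> bool" where
  "is_1UFDD Q \<longleftrightarrow> is_FDD Q \<and>
     (\<forall>y n (\<epsilon>::nat \<Rightarrow> real). (\<forall>j. \<epsilon> j = 1 \<or> \<epsilon> j = -1) \<longrightarrow>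
        norm (\<Sum>j<n. \<epsilon> j *\<^sub>R Q j y) \<le> norm y)"

text \<open>Shrinking: \<open>x* = \<Sum> Q_j* x*\<close> in norm, where \<open>Q_j* x* = x* \<circ> Q_j\<close>.\<close>

definition is_shrinking :: "(nat \<Rightarrow> ('a::real_normed_vector \<Rightarrow>\<^sub>L 'a)) \<Rightarrow> bool" where
  "is_shrinking Q \<longleftrightarrow> (\<forall>xs::'a \<Rightarrow>\<^sub>L real. (\<lambda>j. xs o\<^sub>L Q j) sums xs)"

end

theory Submission
  imports Defs "HOL-Library.Diagonal_Subsequence"
begin

text \<open>
  (i) With \<open>P\<^sub>N = Q\<^sub>0 + \<dots> + Q\<^sub>N\<^sub>-\<^sub>1\<close>, 1-unconditionality makes \<open>2 P\<^sub>N - I\<close> a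
  contraction, so \<open>\<parallel>a + b\<parallel> = \<parallel>a - b\<parallel>\<close> whenever \<open>a\<close> factors through \<open>P\<^sub>N\<close> and \<open>b\<close>
  vanishes on its range.  Shrinking gives \<open>x* \<approx> x* \<circ> P\<^sub>N\<close>, and a bounded (uniform
  boundedness) weak*-null sequence composed with the finite-rank \<open>P\<^sub>N\<close> is norm-null.
  (ii) For a quotient map, composition is an isometry of the duals preserving
  weak*-nullness.  For an isometric embedding \<open>T : X \<rightarrow> Y\<close> it suffices to prove the
  one-sided estimate; norm-preserving Hahn--Banach extensions and a weak*-convergent
  subsequence (sequential Banach--Alaoglu, \<open>Y\<close> separable) produce a weak*-null sequence
  in \<open>Y*\<close> whose (au*) defect dominates that in \<open>X*\<close>.
\<close>

section \<open>Hahn--Banach extension\<close>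

text \<open>Partial linear functionals are represented by their graphs, so that a chain of
  extensions is joined simply by taking the union.  \<open>dominated_graph c G\<close> says that
  \<open>G\<close> is the graph of a linear functional on a subspace, bounded above by \<open>c \<parallel>\<cdot>\<parallel>\<close>.\<close>

definition dominated_graph :: "real \<Rightarrow> ('a::real_normed_vector \<times> real) set \<Rightarrow> bool" where
  "dominated_graph c G \<longleftrightarrow>
     (\<forall>x a b. (x, a) \<in> G \<longrightarrow> (x, b) \<in> G \<longrightarrow> a = b) \<and>
     (\<forall>x a y b. (x, a) \<in> G \<longrightarrow> (y, b) \<in> G \<longrightarrow> (x + y, a + b) \<in> G) \<and>
     (\<forall>x a r. (x, a) \<in> G \<longrightarrow> (r *\<^sub>R x, r * a) \<in> G) \<and>
     (\<forall>x a. (x, a) \<in> G \<longrightarrow> a \<le> c * norm x)"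

lemma dominated_graphD:
  assumes "dominated_graph c G"
  shows dominated_graph_functional: "(x, a) \<in> G \<Longrightarrow> (x, b) \<in> G \<Longrightarrow> a = b"
    and dominated_graph_add: "(x, a) \<in> G \<Longrightarrow> (y, b) \<in> G \<Longrightarrow> (x + y, a + b) \<in> G"
    and dominated_graph_scale: "(x, a) \<in> G \<Longrightarrow> (r *\<^sub>R x, r * a) \<in> G"
    and dominated_graph_bound: "(x, a) \<in> G \<Longrightarrow> a \<le> c * norm x"
  using assms unfolding dominated_graph_def by blast+

definition graph_value :: "('a \<times> real) set \<Rightarrow> 'a \<Rightarrow> real" where
  "graph_value G x = (SOME a. (x, a) \<in> G)"

lemma graph_value_mem: "(x, a) \<in> G \<Longrightarrow> (x, graph_value G x) \<in> G"
  unfolding graph_value_def by (rule someI)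

lemma graph_value_eq: "dominated_graph c G \<Longrightarrow> (x, a) \<in> G \<Longrightarrow> graph_value G x = a"
  using graph_value_mem dominated_graph_functional by metis

lemma dominated_graph_functional_on_domain:
  assumes G: "dominated_graph c G" and ne: "G \<noteq> {}"
  defines "D \<equiv> fst ` G"
  shows "subspace D"
    and "\<And>x. x \<in> D \<Longrightarrow> (x, graph_value G x) \<in> G"
    and "\<And>x y. x \<in> D \<Longrightarrow> y \<in> D \<Longrightarrow> graph_value G (x + y) = graph_value G x + graph_value G y"
    and "\<And>r x. x \<in> D \<Longrightarrow> graph_value G (r *\<^sub>R x) = r * graph_value G x"
    and "\<And>x. x \<in> D \<Longrightarrow> graph_value G x \<le> c * norm x"
proof -
  show mem: "(x, graph_value G x) \<in> G" if "x \<in> D" for x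
    using that graph_value_mem unfolding D_def by force
  obtain p where "p \<in> G" using ne by blast
  then have "(0, 0) \<in> G" using dominated_graph_scale[OF G, of "fst p" "snd p" 0] by simp
  then show "subspace D"
    unfolding subspace_def
  proof (intro conjI ballI allI)
    show "0 \<in> D" using \<open>(0, 0) \<in> G\<close> unfolding D_def by force
  next
    fix x y assume "x \<in> D" "y \<in> D"
    then show "x + y \<in> D" using dominated_graph_add[OF G mem mem] unfolding D_def by force
  next
    fix r x assume "x \<in> D"
    then show "r *\<^sub>R x \<in> D" using dominated_graph_scale[OF G mem] unfolding D_def by force
  qed
  show "graph_value G (x + y) = graph_value G x + graph_value G y" if "x \<in> D" "y \<in> D" for x y
    using graph_value_eq[OF G dominated_graph_add[OF G mem mem]] that by blast
  show "graph_value G (r *\<^sub>R x) = r * graph_value G x" if "x \<in> D" for r x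
    using graph_value_eq[OF G dominated_graph_scale[OF G mem]] that by blast
  show "graph_value G x \<le> c * norm x" if "x \<in> D" for x
    using dominated_graph_bound[OF G mem] that by blast
qed

text \<open>The classical one-dimensional extension step: a value \<open>\<xi>\<close> for the new direction
  \<open>x\<^sub>0\<close> that keeps the extension dominated exists because the lower and upper
  constraints on \<open>\<xi>\<close> are compatible.\<close>

lemma extension_value_exists:
  fixes h :: "'a::real_normed_vector \<Rightarrow> real"
  assumes D: "subspace D" and c: "c \<ge> 0"
    and add: "\<And>x y. x \<in> D \<Longrightarrow> y \<in> D \<Longrightarrow> h (x + y) = h x + h y"
    and bound: "\<And>x. x \<in> D \<Longrightarrow> h x \<le> c * norm x"
  shows "\<exists>\<xi>. (\<forall>y\<in>D. h y - c * norm (y - x0) \<le> \<xi>) \<and> (\<forall>z\<in>D. \<xi> \<le> c * norm (z + x0) - h z)"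
proof -
  have compatible: "h y - c * norm (y - x0) \<le> c * norm (z + x0) - h z" if "y \<in> D" "z \<in> D" for y z
  proof -
    have "h y + h z \<le> c * norm (y + z)"
      using add[OF that] bound subspace_add[OF D that] by metis
    also have "\<dots> \<le> c * (norm (y - x0) + norm (z + x0))"
      using norm_triangle_ineq[of "y - x0" "z + x0"] c by (intro mult_left_mono) auto
    finally show ?thesis by (simp add: algebra_simps)
  qed
  define S where "S = (\<lambda>y. h y - c * norm (y - x0)) ` D"
  have "S \<noteq> {}" "bdd_above S"
    using compatible subspace_0[OF D] unfolding S_def bdd_above_def by blast+
  then show ?thesis
    using compatible unfolding S_def
    by (intro exI[of _ "Sup S"]) (auto intro: cSup_upper cSup_least simp: S_def)
qed

text \<open>With such a value \<open>\<xi>\<close>, the functional \<open>u + t x\<^sub>0 \<mapsto> h u + t \<xi>\<close> is still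
  dominated (rescale by \<open>|t|\<close> and use the upper or lower constraint).\<close>

lemma extension_value_dominates:
  fixes h :: "'a::real_normed_vector \<Rightarrow> real"
  assumes D: "subspace D" and u: "u \<in> D"
    and scale: "\<And>r x. x \<in> D \<Longrightarrow> h (r *\<^sub>R x) = r * h x"
    and bound: "\<And>x. x \<in> D \<Longrightarrow> h x \<le> c * norm x"
    and lower: "\<forall>y\<in>D. h y - c * norm (y - x0) \<le> \<xi>"
    and upper: "\<forall>z\<in>D. \<xi> \<le> c * norm (z + x0) - h z"
  shows "h u + t * \<xi> \<le> c * norm (u + t *\<^sub>R x0)"
proof (cases "t = 0")
  case True
  then show ?thesis using bound u by simp
next
  case False
  define v where "v = (1 / \<bar>t\<bar>) *\<^sub>R u"
  have vD: "v \<in> D" unfolding v_def using subspace_scale[OF D u] .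
  have hu: "h u = \<bar>t\<bar> * h v" using scale[OF u, of "1 / \<bar>t\<bar>"] False by (simp add: v_def)
  show ?thesis
  proof (cases "t > 0")
    case True
    have "u + t *\<^sub>R x0 = \<bar>t\<bar> *\<^sub>R (v + x0)" using True by (simp add: v_def algebra_simps)
    then have "norm (u + t *\<^sub>R x0) = \<bar>t\<bar> * norm (v + x0)" by simp
    moreover have "\<bar>t\<bar> * \<xi> \<le> \<bar>t\<bar> * (c * norm (v + x0) - h v)"
      using upper vD by (intro mult_left_mono) auto
    ultimately show ?thesis using True by (simp only: hu) (simp add: algebra_simps)
  next
    case False
    then have "t < 0" using \<open>t \<noteq> 0\<close> by simp
    have "u + t *\<^sub>R x0 = \<bar>t\<bar> *\<^sub>R (v - x0)" using \<open>t < 0\<close> by (simp add: v_def algebra_simps)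
    then have "norm (u + t *\<^sub>R x0) = \<bar>t\<bar> * norm (v - x0)" by simp
    moreover have "\<bar>t\<bar> * (h v - c * norm (v - x0)) \<le> \<bar>t\<bar> * \<xi>"
      using lower vD by (intro mult_left_mono) auto
    ultimately show ?thesis using \<open>t < 0\<close> by (simp only: hu) (simp add: algebra_simps)
  qed
qed

lemma dominated_graph_extend:
  fixes h :: "'a::real_normed_vector \<Rightarrow> real"
  assumes D: "subspace D" and x0: "x0 \<notin> D"
    and add: "\<And>x y. x \<in> D \<Longrightarrow> y \<in> D \<Longrightarrow> h (x + y) = h x + h y"
    and scale: "\<And>r x. x \<in> D \<Longrightarrow> h (r *\<^sub>R x) = r * h x"
    and dominated: "\<And>u t. u \<in> D \<Longrightarrow> h u + t * \<xi> \<le> c * norm (u + t *\<^sub>R x0)"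
  defines "G \<equiv> {(x + t *\<^sub>R x0, h x + t * \<xi>) | x t. x \<in> D}"
  shows "dominated_graph c G" and "\<And>x. x \<in> D \<Longrightarrow> (x, h x) \<in> G" and "(x0, \<xi>) \<in> G"
proof -
  have unique: "x = x' \<and> t = t'"
    if "x \<in> D" "x' \<in> D" "x + t *\<^sub>R x0 = x' + t' *\<^sub>R x0" for x x' t t'
  proof (cases "t = t'")
    case False
    have "(t - t') *\<^sub>R x0 = x' - x" using that(3) by (simp add: algebra_simps)
    then have "x0 = (1 / (t - t')) *\<^sub>R (x' - x)" using False by (simp add: \<open>(t - t') *\<^sub>R x0 = x' - x\<close>[symmetric])
    then have "x0 \<in> D" using that D by (simp add: subspace_diff subspace_scale)
    then show ?thesis using x0 by blast
  qed (use that in simp)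
  show "dominated_graph c G"
    unfolding dominated_graph_def
  proof (intro conjI allI impI)
    fix x a b assume "(x, a) \<in> G" "(x, b) \<in> G"
    then show "a = b" using unique unfolding G_def by auto
  next
    fix x a y b assume "(x, a) \<in> G" "(y, b) \<in> G"
    then obtain u t v s where "x = u + t *\<^sub>R x0" "a = h u + t * \<xi>" "u \<in> D"
      and "y = v + s *\<^sub>R x0" "b = h v + s * \<xi>" "v \<in> D"
      unfolding G_def by auto
    then show "(x + y, a + b) \<in> G" unfolding G_def
      by (intro CollectI exI[of _ "u + v"] exI[of _ "t + s"]) (auto simp: add subspace_add[OF D] algebra_simps)
  next
    fix x a r assume "(x, a) \<in> G"
    then obtain u t where "x = u + t *\<^sub>R x0" "a = h u + t * \<xi>" "u \<in> D" unfolding G_def by auto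
    then show "(r *\<^sub>R x, r * a) \<in> G" unfolding G_def
      by (intro CollectI exI[of _ "r *\<^sub>R u"] exI[of _ "r * t"]) (auto simp: scale subspace_scale[OF D] algebra_simps)
  next
    fix x a assume "(x, a) \<in> G"
    then show "a \<le> c * norm x" using dominated unfolding G_def by auto
  qed
  show "(x, h x) \<in> G" if "x \<in> D" for x
    unfolding G_def using that by (intro CollectI exI[of _ x] exI[of _ 0]) auto
  show "(x0, \<xi>) \<in> G"
    unfolding G_def using D scale[of 0 0] subspace_0 by (intro CollectI exI[of _ 0] exI[of _ 1]) auto
qed

lemma dominated_graph_Union:
  assumes "\<forall>G\<in>C. dominated_graph c G" and chain: "\<forall>A\<in>C. \<forall>B\<in>C. A \<subseteq> B \<or> B \<subseteq> A"
  shows "dominated_graph c (\<Union>C)"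
proof -
  have common: "\<exists>G\<in>C. p \<in> G \<and> q \<in> G" if "p \<in> \<Union>C" "q \<in> \<Union>C" for p q
    using that chain by blast
  show ?thesis
    unfolding dominated_graph_def
  proof (intro conjI allI impI)
    fix x a b assume "(x, a) \<in> \<Union>C" "(x, b) \<in> \<Union>C"
    then show "a = b" using common assms(1) dominated_graph_functional by metis
  next
    fix x a y b assume "(x, a) \<in> \<Union>C" "(y, b) \<in> \<Union>C"
    then show "(x + y, a + b) \<in> \<Union>C"
      using common assms(1) dominated_graph_add by (metis UnionI)
  next
    fix x a r assume "(x, a) \<in> \<Union>C"
    then show "(r *\<^sub>R x, r * a) \<in> \<Union>C" using assms(1) dominated_graph_scale by blast
  next
    fix x a assume "(x, a) \<in> \<Union>C"
    then show "a \<le> c * norm x" using assms(1) dominated_graph_bound by blast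
  qed
qed

text \<open>A maximal dominated graph has full domain: otherwise the one-dimensional
  extension step would enlarge it.\<close>

lemma maximal_dominated_graph_total:
  fixes M :: "('a::real_normed_vector \<times> real) set"
  assumes M: "dominated_graph c M" "M \<noteq> {}" and c: "c \<ge> 0"
    and maximal: "\<And>G. dominated_graph c G \<Longrightarrow> M \<subseteq> G \<Longrightarrow> G = M"
  shows "fst ` M = UNIV"
proof (rule ccontr)
  assume "fst ` M \<noteq> UNIV"
  then obtain x0 where x0: "x0 \<notin> fst ` M" by blast
  define h where "h = graph_value M"
  note domain = dominated_graph_functional_on_domain[OF M, folded h_def]
  obtain \<xi> where \<xi>: "\<forall>y\<in>fst ` M. h y - c * norm (y - x0) \<le> \<xi>" "\<forall>z\<in>fst ` M. \<xi> \<le> c * norm (z + x0) - h z"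
    using extension_value_exists[OF domain(1) c domain(3,5)] by blast
  note extend = dominated_graph_extend[OF domain(1) x0 domain(3,4)
      extension_value_dominates[OF domain(1) _ domain(4,5) \<xi>]]
  have "M \<subseteq> {(x + t *\<^sub>R x0, h x + t * \<xi>) | x t. x \<in> fst ` M}"
  proof
    fix p assume "p \<in> M"
    then have "fst p \<in> fst ` M" "h (fst p) = snd p"
      using graph_value_eq[OF M(1), of "fst p" "snd p"] by (auto simp: h_def)
    then show "p \<in> {(x + t *\<^sub>R x0, h x + t * \<xi>) | x t. x \<in> fst ` M}"
      using extend(2)[of "fst p"] by (metis prod.collapse)
  qed
  then have "(x0, \<xi>) \<in> M" using maximal[OF extend(1)] extend(3) by simp
  then show False using x0 by force
qed

lemma dominated_graph_total_extension:
  fixes G0 :: "('a::real_normed_vector \<times> real) set"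
  assumes G0: "dominated_graph c G0" "G0 \<noteq> {}" and c: "c \<ge> 0"
  shows "\<exists>h. linear h \<and> (\<forall>(x, a)\<in>G0. h x = a) \<and> (\<forall>x. h x \<le> c * norm x)"
proof -
  define A where "A = {G. dominated_graph c G \<and> G0 \<subseteq> G}"
  have "\<forall>C\<in>chains A. \<exists>U\<in>A. \<forall>X\<in>C. X \<subseteq> U"
  proof
    fix C assume C: "C \<in> chains A"
    show "\<exists>U\<in>A. \<forall>X\<in>C. X \<subseteq> U"
    proof (cases "C = {}")
      case False
      then have "\<Union>C \<in> A"
        using C dominated_graph_Union[of C c] unfolding A_def chains_def chain_subset_def by blast
      then show ?thesis by blast
    qed (use G0 A_def in auto)
  qed
  from Zorn_Lemma2[OF this] obtain M where "M \<in> A" and maximal: "\<forall>X\<in>A. M \<subseteq> X \<longrightarrow> X = M"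
    by blast
  then have M: "dominated_graph c M" "G0 \<subseteq> M" "M \<noteq> {}" using G0 A_def by auto
  have total: "fst ` M = UNIV"
    using maximal M(2) by (intro maximal_dominated_graph_total[OF M(1,3) c]) (auto simp: A_def)
  note domain = dominated_graph_functional_on_domain[OF M(1,3), unfolded total]
  have "linear (graph_value M)" by (rule linearI) (use domain in auto)
  moreover have "\<forall>(x, a)\<in>G0. graph_value M x = a" using M graph_value_eq by fast
  ultimately show ?thesis using domain(5) by blast
qed

lemma isometry_functional_extension:
  fixes T :: "'s::real_normed_vector \<Rightarrow>\<^sub>L 'y::real_normed_vector" and f :: "'s \<Rightarrow>\<^sub>L real"
  assumes iso: "\<And>x. norm (T x) = norm x"
  shows "\<exists>F::'y \<Rightarrow>\<^sub>L real. F o\<^sub>L T = f \<and> norm F \<le> norm f"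
proof -
  define G0 where "G0 = range (\<lambda>s. (T s, f s))"
  have inj: "s = s'" if "T s = T s'" for s s'
    using iso[of "s - s'"] that by (simp add: blinfun.diff_right)
  have "dominated_graph (norm f) G0"
    unfolding dominated_graph_def G0_def
  proof (intro conjI allI impI)
    fix x a y b
    assume "(x, a) \<in> range (\<lambda>s. (T s, f s))" "(y, b) \<in> range (\<lambda>s. (T s, f s))"
    then obtain s s' where "x = T s" "a = f s" "y = T s'" "b = f s'" by auto
    then show "(x + y, a + b) \<in> range (\<lambda>s. (T s, f s))"
      by (auto simp: blinfun.add_right intro!: image_eqI[of _ _ "s + s'"])
  next
    fix x a r assume "(x, a) \<in> range (\<lambda>s. (T s, f s))"
    then obtain s where "x = T s" "a = f s" by auto
    then show "(r *\<^sub>R x, r * a) \<in> range (\<lambda>s. (T s, f s))"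
      by (auto simp: blinfun.scaleR_right intro!: image_eqI[of _ _ "r *\<^sub>R s"])
  next
    fix x a assume "(x, a) \<in> range (\<lambda>s. (T s, f s))"
    then obtain s where "x = T s" "a = f s" by auto
    then show "a \<le> norm f * norm x" using norm_blinfun[of f s] iso[of s] by simp
  qed (use inj in auto)
  then obtain h where h: "linear h" "\<forall>(x, a)\<in>G0. h x = a" "\<forall>x. h x \<le> norm f * norm x"
    using dominated_graph_total_extension[of "norm f" G0] G0_def by auto
  have habs: "\<bar>h x\<bar> \<le> norm f * norm x" for x
    using h(3) spec[OF h(3), of "- x"] linear_neg[OF h(1), of x] by (simp add: abs_le_iff)
  have "bounded_linear h"
    using h(1) habs
    by (intro bounded_linear_intro[where K = "norm f"]) (auto simp: linear_add linear_scale mult.commute)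
  then have Fh: "blinfun_apply (Blinfun h) = h" by (rule bounded_linear_Blinfun_apply)
  have "Blinfun h o\<^sub>L T = f" using h(2) by (intro blinfun_eqI) (auto simp: Fh G0_def)
  moreover have "norm (Blinfun h) \<le> norm f" using habs by (intro norm_blinfun_bound) (auto simp: Fh)
  ultimately show ?thesis by blast
qed

lemma norm_compose_isometry_le:
  fixes T :: "'s::real_normed_vector \<Rightarrow>\<^sub>L 'y::real_normed_vector" and F :: "'y \<Rightarrow>\<^sub>L real"
  assumes iso: "\<And>x. norm (T x) = norm x"
  shows "norm (F o\<^sub>L T) \<le> norm F"
proof -
  have "norm T \<le> 1" using iso by (intro norm_blinfun_bound) auto
  then show ?thesis
    using norm_blinfun_compose[of F T] mult_left_mono[of "norm T" 1 "norm F"] by simp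
qed

section \<open>Uniform boundedness\<close>

text \<open>A functional bounded on some ball is bounded: translate the ball to the origin.\<close>

lemma functional_bound_from_ball:
  fixes f :: "'a::real_normed_vector \<Rightarrow>\<^sub>L real"
  assumes r: "r > 0" and K: "\<And>y. y \<in> ball x0 r \<Longrightarrow> \<bar>f y\<bar> \<le> K"
  shows "norm f \<le> 4 * K / r"
proof (rule norm_blinfun_bound)
  have "0 \<le> \<bar>f x0\<bar>" by simp
  also have "\<dots> \<le> K" using K r by simp
  finally show "0 \<le> 4 * K / r" using r by simp
next
  fix y
  show "norm (f y) \<le> 4 * K / r * norm y"
  proof (cases "y = 0")
    case False
    define z where "z = (r / (2 * norm y)) *\<^sub>R y"
    have "norm z = r / 2" using False r unfolding z_def by simp
    then have "x0 + z \<in> ball x0 r" "x0 \<in> ball x0 r" using r by (auto simp: dist_norm)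
    then have "\<bar>f z\<bar> \<le> 2 * K" using K[of "x0 + z"] K[of x0] by (simp add: blinfun.add_right)
    moreover have "f z = (r / (2 * norm y)) * f y" unfolding z_def by (simp add: blinfun.scaleR_right)
    ultimately have "r * \<bar>f y\<bar> \<le> 4 * K * norm y"
      using False r by (simp add: abs_mult field_simps)
    then show ?thesis using r by (simp add: field_simps)
  qed simp
qed

lemma uniform_boundedness:
  fixes f :: "nat \<Rightarrow> ('a::banach \<Rightarrow>\<^sub>L real)"
  assumes bounded: "\<And>x. \<exists>B. \<forall>n. \<bar>f n x\<bar> \<le> B"
  shows "\<exists>M. \<forall>n. norm (f n) \<le> M"
proof -
  define F where "F k = (\<Inter>n. {x. \<bar>f n x\<bar> \<le> real k})" for k :: nat
  have closed: "closed (F k)" for k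
    unfolding F_def by (intro closed_INT ballI closed_Collect_le continuous_intros)
  have cover: "\<Union>(range F) = UNIV"
  proof -
    have "x \<in> F (nat \<lceil>B\<rceil>)" if "\<forall>n. \<bar>f n x\<bar> \<le> B" for x B
      using that unfolding F_def by (auto intro: order_trans[OF _ real_nat_ceiling_ge])
    then have "\<exists>k. x \<in> F k" for x using bounded[of x] by blast
    then show ?thesis by blast
  qed
  have "\<exists>k. interior (F k) \<noteq> {}"
  proof (rule ccontr)
    assume "\<not> ?thesis"
    then have "euclidean interior_of \<Union>(range F) = {}"
      by (intro Baire_category_alt) (auto simp: completely_metrizable_space_euclidean closed)
    then show False using cover by simp
  qed
  then obtain k x0 where "x0 \<in> interior (F k)" by blast
  then obtain r where "r > 0" "ball x0 r \<subseteq> F k" using mem_interior by blast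
  then have "norm (f n) \<le> 4 * real k / r" for n
    by (intro functional_bound_from_ball) (use F_def in blast)+
  then show ?thesis by blast
qed

lemma weak_star_null_bounded:
  fixes f :: "nat \<Rightarrow> ('a::banach \<Rightarrow>\<^sub>L real)"
  assumes "weak_star_null f"
  shows "\<exists>M. \<forall>n. norm (f n) \<le> M"
proof (rule uniform_boundedness)
  fix x
  have "Bseq (\<lambda>n. f n x)"
    using assms convergent_imp_Bseq convergentI unfolding weak_star_null_def by blast
  then show "\<exists>B. \<forall>n. \<bar>f n x\<bar> \<le> B" unfolding Bseq_def by (auto simp: real_norm_def)
qed

section \<open>Sequential Banach--Alaoglu\<close>

lemma common_convergent_subsequence:
  fixes u :: "nat \<Rightarrow> nat \<Rightarrow> real"
  assumes bounded: "\<And>k. bounded (range (u k))"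
  shows "\<exists>r. strict_mono r \<and> (\<forall>k. convergent (u k \<circ> r))"
proof -
  interpret sub: subseqs "\<lambda>k s. convergent (u k \<circ> s)"
  proof
    fix k and s :: "nat \<Rightarrow> nat" assume "strict_mono s"
    have "bounded (range (u k \<circ> s))" using bounded[of k] by (rule bounded_subset) auto
    then obtain l r' where "strict_mono r'" "((u k \<circ> s) \<circ> r') \<longlonglongrightarrow> l"
      using bounded_imp_convergent_subsequence by blast
    then show "\<exists>r'. strict_mono r' \<and> convergent (u k \<circ> (s \<circ> r'))"
      by (auto simp: convergent_def o_assoc)
  qed
  have "convergent (u k \<circ> sub.diagseq)" for k
  proof -
    have "convergent (u k \<circ> (sub.diagseq \<circ> (+) (Suc k)))"
    proof (rule sub.diagseq_holds)
      fix r' s n assume "strict_mono (r'::nat \<Rightarrow> nat)" "convergent (u n \<circ> s)"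
      then show "convergent (u n \<circ> (s \<circ> r'))"
        using convergent_subseq_convergent[of "u n \<circ> s" r'] by (simp add: o_assoc)
    qed
    then obtain l where "(\<lambda>i. u k (sub.diagseq (i + Suc k))) \<longlonglongrightarrow> l"
      by (auto simp: convergent_def o_def add.commute)
    then show ?thesis
      using LIMSEQ_offset[of "\<lambda>i. u k (sub.diagseq i)" "Suc k"] by (auto simp: convergent_def o_def)
  qed
  then show ?thesis using sub.subseq_diagseq by blast
qed

lemma equibounded_Cauchy_from_dense:
  fixes g :: "nat \<Rightarrow> ('a::real_normed_vector \<Rightarrow>\<^sub>L real)" and C :: "'a set"
  assumes dense: "closure C = UNIV" and M: "\<And>n. norm (g n) \<le> M"
    and Cauchy_C: "\<And>c. c \<in> C \<Longrightarrow> Cauchy (\<lambda>n. g n c)"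
  shows "Cauchy (\<lambda>n. g n x)"
proof (rule CauchyI)
  fix e :: real assume e: "e > 0"
  have M0: "M \<ge> 0" using M[of 0] norm_ge_zero[of "g 0"] by linarith
  have "x \<in> closure C" using dense by simp
  moreover have "e / (3 * (M + 1)) > 0" using e M0 by simp
  ultimately obtain c where c: "c \<in> C" "dist c x < e / (3 * (M + 1))"
    using closure_approachable[of x C] by blast
  have near: "\<bar>g n x - g n c\<bar> < e / 3" for n
  proof -
    have "\<bar>g n x - g n c\<bar> \<le> M * norm (x - c)"
      using norm_blinfun[of "g n" "x - c"] mult_right_mono[OF M[of n] norm_ge_zero[of "x - c"]]
      by (simp add: blinfun.diff_right)
    also have "\<dots> \<le> (M + 1) * norm (x - c)" by (simp add: mult_right_mono)
    also have "\<dots> < (M + 1) * (e / (3 * (M + 1)))"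
      using c M0 by (intro mult_strict_left_mono) (auto simp: dist_norm norm_minus_commute)
    also have "\<dots> = e / 3" using M0 by (simp add: field_simps)
    finally show ?thesis .
  qed
  obtain N where N: "\<forall>m\<ge>N. \<forall>n\<ge>N. norm (g m c - g n c) < e / 3"
    using Cauchy_C[OF c(1)] e unfolding Cauchy_iff by (meson divide_pos_pos zero_less_numeral)
  show "\<exists>N. \<forall>m\<ge>N. \<forall>n\<ge>N. norm (g m x - g n x) < e"
  proof (intro exI allI impI)
    fix m n assume "N \<le> m" "N \<le> n"
    then have "\<bar>g m c - g n c\<bar> < e / 3" using N by simp
    then show "norm (g m x - g n x) < e"
      using near[of m] near[of n] unfolding real_norm_def abs_less_iff by linarith
  qed
qed

lemma pointwise_limit_blinfun:
  fixes g :: "nat \<Rightarrow> ('a::real_normed_vector \<Rightarrow>\<^sub>L real)"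
  assumes lim: "\<And>x. (\<lambda>n. g n x) \<longlonglongrightarrow> L0 x" and M: "\<And>n. norm (g n) \<le> M"
  shows "bounded_linear L0"
proof (rule bounded_linear_intro[where K = M])
  fix x y
  have "(\<lambda>n. g n (x + y)) \<longlonglongrightarrow> L0 x + L0 y"
    using tendsto_add[OF lim[of x] lim[of y]] by (simp add: blinfun.add_right)
  then show "L0 (x + y) = L0 x + L0 y" using lim LIMSEQ_unique by blast
next
  fix a x
  have "(\<lambda>n. g n (a *\<^sub>R x)) \<longlonglongrightarrow> a *\<^sub>R L0 x"
    using tendsto_scaleR[OF tendsto_const lim[of x]] by (simp add: blinfun.scaleR_right)
  then show "L0 (a *\<^sub>R x) = a *\<^sub>R L0 x" using lim LIMSEQ_unique by blast
next
  fix x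
  have "\<bar>g n x\<bar> \<le> M * norm x" for n
    using norm_blinfun[of "g n" x] mult_right_mono[OF M[of n] norm_ge_zero[of x]] by simp
  moreover have "(\<lambda>n. \<bar>g n x\<bar>) \<longlonglongrightarrow> \<bar>L0 x\<bar>" using lim by (intro tendsto_intros)
  ultimately have "\<bar>L0 x\<bar> \<le> M * norm x" by (intro LIMSEQ_le_const2) auto
  then show "norm (L0 x) \<le> norm x * M" by (simp add: mult.commute)
qed

lemma sequential_banach_alaoglu:
  fixes g :: "nat \<Rightarrow> ('a::real_normed_vector \<Rightarrow>\<^sub>L real)" and C :: "'a set"
  assumes C: "countable C" "closure C = UNIV" and M: "\<And>n. norm (g n) \<le> M"
  shows "\<exists>r (L::'a \<Rightarrow>\<^sub>L real). strict_mono r \<and> (\<forall>x. (\<lambda>n. g (r n) x) \<longlonglongrightarrow> L x)"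
proof -
  have "C \<noteq> {}" using C(2) by auto
  define d :: "nat \<Rightarrow> 'a" where "d = from_nat_into C"
  have d: "range d = C" unfolding d_def using range_from_nat_into[OF \<open>C \<noteq> {}\<close> C(1)] .
  have "bounded (range (\<lambda>n. g n (d k)))" for k
  proof -
    have "norm (g n (d k)) \<le> M * norm (d k)" for n
      using norm_blinfun[of "g n" "d k"] mult_right_mono[OF M[of n] norm_ge_zero[of "d k"]] by simp
    then show ?thesis unfolding bounded_iff by blast
  qed
  then obtain r where r: "strict_mono r" "\<And>k. convergent ((\<lambda>n. g n (d k)) \<circ> r)"
    using common_convergent_subsequence[of "\<lambda>k n. g n (d k)"] by blast
  have "Cauchy (\<lambda>n. g (r n) x)" for x
  proof (rule equibounded_Cauchy_from_dense[OF C(2) M])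
    fix c assume "c \<in> C"
    then obtain k where "c = d k" using d by blast
    then show "Cauchy (\<lambda>n. g (r n) c)" using r(2)[of k] convergent_Cauchy by (simp add: o_def)
  qed
  then have lim: "(\<lambda>n. g (r n) x) \<longlonglongrightarrow> lim (\<lambda>n. g (r n) x)" for x
    by (simp add: Cauchy_convergent_iff convergent_LIMSEQ_iff)
  have "bounded_linear (\<lambda>x. lim (\<lambda>n. g (r n) x))"
    using lim M by (rule pointwise_limit_blinfun)
  then show ?thesis
    using r(1) lim by (intro exI[of _ r] exI[of _ "Blinfun (\<lambda>x. lim (\<lambda>n. g (r n) x))"])
      (simp add: bounded_linear_Blinfun_apply)
qed

section \<open>Finite-dimensional spans\<close>

definition boundedly_compact :: "'a::real_normed_vector set \<Rightarrow> bool" where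
  "boundedly_compact S \<longleftrightarrow>
     (\<forall>v::nat \<Rightarrow> 'a. (\<forall>n. v n \<in> S) \<longrightarrow> bounded (range v) \<longrightarrow> (\<exists>r w. strict_mono r \<and> w \<in> S \<and> (v \<circ> r) \<longlonglongrightarrow> w))"

lemma boundedly_compact_imp_closed:
  assumes "boundedly_compact S"
  shows "closed S"
  unfolding closed_sequential_limits
proof (intro allI impI)
  fix u l assume u: "(\<forall>n. u n \<in> S) \<and> u \<longlonglongrightarrow> l"
  then obtain r w where r: "strict_mono r" "w \<in> S" "(u \<circ> r) \<longlonglongrightarrow> w"
    using assms convergent_imp_bounded unfolding boundedly_compact_def by metis
  have "(u \<circ> r) \<longlonglongrightarrow> l" using LIMSEQ_subseq_LIMSEQ u r(1) by blast
  then show "l \<in> S" using r LIMSEQ_unique by metis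
qed

lemma closed_subspace_coefficient_bound:
  fixes S :: "'a::real_normed_vector set"
  assumes S: "closed S" "subspace S" and b: "b \<notin> S"
  shows "\<exists>d>0. \<forall>t. \<forall>u\<in>S. \<bar>t\<bar> * d \<le> norm (t *\<^sub>R b + u)"
proof (intro exI conjI allI ballI)
  show "infdist b S > 0"
    using infdist_pos_not_in_closed[OF S(1) _ b] subspace_0[OF S(2)] by blast
next
  fix t u assume u: "u \<in> S"
  show "\<bar>t\<bar> * infdist b S \<le> norm (t *\<^sub>R b + u)"
  proof (cases "t = 0")
    case False
    have "- ((1 / t) *\<^sub>R u) \<in> S" using u S(2) by (simp add: subspace_neg subspace_scale)
    then have "infdist b S \<le> norm (b + (1 / t) *\<^sub>R u)"
      using infdist_le[of "- ((1 / t) *\<^sub>R u)" S b] by (simp add: dist_norm)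
    also have "b + (1 / t) *\<^sub>R u = (1 / t) *\<^sub>R (t *\<^sub>R b + u)" using False by (simp add: algebra_simps)
    finally have "infdist b S \<le> norm (t *\<^sub>R b + u) / \<bar>t\<bar>" by simp
    then show ?thesis using False by (simp add: field_simps)
  qed simp
qed

text \<open>Adjoining a vector to a boundedly compact span keeps it boundedly compact: the new
  coefficients of a bounded sequence are bounded, so one extracts twice.\<close>

lemma boundedly_compact_span_insert:
  fixes B :: "'a::real_normed_vector set"
  assumes IH: "boundedly_compact (span B)" and b: "b \<notin> span B"
  shows "boundedly_compact (span (insert b B))"
  unfolding boundedly_compact_def
proof (intro allI impI)
  obtain d where d: "d > 0" "\<And>t u. u \<in> span B \<Longrightarrow> \<bar>t\<bar> * d \<le> norm (t *\<^sub>R b + u)"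
    using closed_subspace_coefficient_bound[OF boundedly_compact_imp_closed[OF IH] _ b] by auto
  fix v :: "nat \<Rightarrow> 'a" assume v: "\<forall>n. v n \<in> span (insert b B)" "bounded (range v)"
  obtain K where K: "\<And>n. norm (v n) \<le> K" using v(2) unfolding bounded_iff by blast
  have "\<forall>n. \<exists>k. v n - k *\<^sub>R b \<in> span B" using v(1) span_insert[of b B] by blast
  then obtain t where u: "\<And>n. v n - t n *\<^sub>R b \<in> span B" by metis
  define u where "u n = v n - t n *\<^sub>R b" for n
  have vtu: "v n = t n *\<^sub>R b + u n" and uB: "u n \<in> span B" for n using u by (auto simp: u_def)
  have t: "\<bar>t n\<bar> \<le> K / d" for n
    using d(2)[OF uB[of n], of "t n"] K[of n] d(1) vtu[of n] by (simp add: field_simps)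
  then have "bounded (range t)" unfolding bounded_iff by (auto simp: real_norm_def)
  then obtain \<tau> r1 where r1: "strict_mono r1" "(t \<circ> r1) \<longlonglongrightarrow> \<tau>"
    using bounded_imp_convergent_subsequence by blast
  have "norm (u n) \<le> K + K / d * norm b" for n
    using norm_triangle_ineq4[of "v n" "t n *\<^sub>R b"] K[of n] mult_right_mono[OF t[of n] norm_ge_zero[of b]]
    by (simp add: u_def)
  then have "bounded (range (u \<circ> r1))" unfolding bounded_iff by auto
  then obtain r2 w where r2: "strict_mono r2" "w \<in> span B" "((u \<circ> r1) \<circ> r2) \<longlonglongrightarrow> w"
    using IH uB unfolding boundedly_compact_def by (metis comp_apply)
  have "(\<lambda>n. ((t \<circ> r1) \<circ> r2) n *\<^sub>R b + ((u \<circ> r1) \<circ> r2) n) \<longlonglongrightarrow> \<tau> *\<^sub>R b + w"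
    using LIMSEQ_subseq_LIMSEQ[OF r1(2) r2(1)] r2(3) by (intro tendsto_intros)
  then have "(v \<circ> (r1 \<circ> r2)) \<longlonglongrightarrow> \<tau> *\<^sub>R b + w" by (simp add: vtu o_def)
  moreover have "\<tau> *\<^sub>R b + w \<in> span (insert b B)"
    using r2(2) by (simp add: span_add span_base span_scale span_mono[of B "insert b B", THEN subsetD] subset_insertI)
  ultimately show "\<exists>r w. strict_mono r \<and> w \<in> span (insert b B) \<and> (v \<circ> r) \<longlonglongrightarrow> w"
    using strict_mono_o[OF r1(1) r2(1)] by blast
qed

lemma finite_span_boundedly_compact:
  fixes B :: "'a::real_normed_vector set"
  assumes "finite B"
  shows "boundedly_compact (span B)"
  using assms
proof (induction B rule: finite_induct)
  case empty
  show ?case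
    unfolding boundedly_compact_def
    by (auto intro!: exI[of _ id] exI[of _ 0] simp: strict_mono_def o_def)
next
  case (insert b B)
  then show ?case
    using boundedly_compact_span_insert[of B b] span_redundant[of b B] by (cases "b \<in> span B") simp_all
qed

text \<open>The span of a finite set is separable: it lies in the closure of a countable
  subset of itself (rational combinations, built up one vector at a time).\<close>

lemma finite_span_separable:
  fixes B :: "'a::real_normed_vector set"
  assumes "finite B"
  shows "\<exists>C. countable C \<and> C \<subseteq> span B \<and> span B \<subseteq> closure C"
  using assms
proof (induction B rule: finite_induct)
  case empty
  then show ?case by (intro exI[of _ "{0}"]) auto
next
  case (insert b B)
  then obtain C where C: "countable C" "C \<subseteq> span B" "span B \<subseteq> closure C" by blast
  define \<phi> where "\<phi> p = fst p + snd p *\<^sub>R b" for p :: "'a \<times> real"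
  have "countable (\<phi> ` (C \<times> \<rat>))" using C(1) countable_rat by blast
  moreover have "\<phi> ` (C \<times> \<rat>) \<subseteq> span (insert b B)"
    using C(2) by (auto simp: \<phi>_def span_add span_base span_scale span_mono[of B "insert b B", THEN subsetD] subset_insertI)
  moreover have "span (insert b B) \<subseteq> closure (\<phi> ` (C \<times> \<rat>))"
  proof
    fix x assume "x \<in> span (insert b B)"
    then obtain k where "x - k *\<^sub>R b \<in> span B" using span_insert[of b B] by blast
    then have "x \<in> \<phi> ` closure (C \<times> \<rat>)"
      using C(3) by (force simp: \<phi>_def closure_Times Rats_closure_real)
    moreover have "\<phi> ` closure (C \<times> \<rat>) \<subseteq> closure (\<phi> ` (C \<times> \<rat>))"
      unfolding \<phi>_def by (intro continuous_image_closure_subset[of UNIV]) (auto intro!: continuous_intros)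
    ultimately show "x \<in> closure (\<phi> ` (C \<times> \<rat>))" by blast
  qed
  ultimately show ?case by blast
qed

section \<open>Finite-rank operators and weak*-null sequences\<close>

lemma blinfun_norm_witness:
  fixes f :: "'a::real_normed_vector \<Rightarrow>\<^sub>L real"
  assumes "c < norm f" "0 \<le> c"
  shows "\<exists>y. norm y \<le> 1 \<and> c < \<bar>f y\<bar>"
proof (rule ccontr)
  assume "\<not> ?thesis"
  then have unit: "norm y \<le> 1 \<Longrightarrow> \<bar>f y\<bar> \<le> c" for y using not_less by blast
  have "\<bar>f y\<bar> \<le> c * norm y" for y
  proof (cases "y = 0")
    case False
    have "\<bar>f ((1 / norm y) *\<^sub>R y)\<bar> \<le> c" using unit False by simp
    then show ?thesis using False by (simp add: blinfun.scaleR_right abs_mult field_simps)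
  qed simp
  then have "norm f \<le> c" using assms(2) by (intro norm_blinfun_bound) auto
  then show False using assms(1) by simp
qed

lemma equibounded_null_along_convergent:
  fixes \<phi> :: "nat \<Rightarrow> ('a::real_normed_vector \<Rightarrow>\<^sub>L real)"
  assumes M: "\<And>n. norm (\<phi> n) \<le> M" and \<phi>w: "(\<lambda>n. \<phi> n w) \<longlonglongrightarrow> 0" and v: "v \<longlonglongrightarrow> w"
  shows "(\<lambda>n. \<phi> n (v n)) \<longlonglongrightarrow> 0"
proof (rule Lim_null_comparison)
  show "\<forall>\<^sub>F n in sequentially. norm (\<phi> n (v n)) \<le> \<bar>\<phi> n w\<bar> + M * norm (v n - w)"
  proof (intro always_eventually allI)
    fix n
    have "\<bar>\<phi> n (v n - w)\<bar> \<le> M * norm (v n - w)"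
      using norm_blinfun[of "\<phi> n" "v n - w"] mult_right_mono[OF M[of n] norm_ge_zero[of "v n - w"]] by simp
    then show "norm (\<phi> n (v n)) \<le> \<bar>\<phi> n w\<bar> + M * norm (v n - w)"
      by (simp add: blinfun.diff_right)
  qed
  have "(\<lambda>n. norm (v n - w)) \<longlonglongrightarrow> 0" using v by (simp add: LIM_zero tendsto_norm_zero)
  then show "(\<lambda>n. \<bar>\<phi> n w\<bar> + M * norm (v n - w)) \<longlonglongrightarrow> 0"
    using \<phi>w by (intro tendsto_add_zero tendsto_mult_right_zero tendsto_rabs_zero)
qed

text \<open>Composing a bounded weak*-null sequence with a finite-rank operator gives a
  norm-null sequence, by compactness of the image of the unit ball.\<close>

lemma finite_rank_weak_star_null:
  fixes \<phi> :: "nat \<Rightarrow> ('a::real_normed_vector \<Rightarrow>\<^sub>L real)" and P :: "'a \<Rightarrow>\<^sub>L 'a"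
  assumes B: "finite B" and PB: "\<And>y. P y \<in> span B"
    and null: "weak_star_null \<phi>" and M: "\<And>n. norm (\<phi> n) \<le> M"
  shows "(\<lambda>n. norm (\<phi> n o\<^sub>L P)) \<longlonglongrightarrow> 0"
proof (rule order_tendstoI)
  fix e :: real assume e: "e > 0"
  show "\<forall>\<^sub>F n in sequentially. norm (\<phi> n o\<^sub>L P) < e"
  proof (rule ccontr)
    assume "\<not> ?thesis"
    from not_eventually_sequentiallyD[OF this]
    obtain r :: "nat \<Rightarrow> nat" where r: "strict_mono r" "\<And>n. e \<le> norm (\<phi> (r n) o\<^sub>L P)"
      by (auto simp: not_less)
    have "\<exists>y. norm y \<le> 1 \<and> e / 2 < \<bar>\<phi> (r n) (P y)\<bar>" for n
      using blinfun_norm_witness[of "e / 2" "\<phi> (r n) o\<^sub>L P"] r(2)[of n] e by simp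
    then have "\<forall>n. \<exists>y. norm y \<le> 1 \<and> e / 2 < \<bar>\<phi> (r n) (P y)\<bar>" by blast
    from choice[OF this] obtain y
      where y: "\<And>n. norm (y n) \<le> 1" "\<And>n. e / 2 < \<bar>\<phi> (r n) (P (y n))\<bar>" by blast
    have "norm (P (y n)) \<le> norm P" for n
      using norm_blinfun[of P "y n"] mult_left_mono[OF y(1)[of n] norm_ge_zero[of P]] by simp
    then have "bounded (range (\<lambda>n. P (y n)))" unfolding bounded_iff by blast
    moreover have "\<forall>n. P (y n) \<in> span B" using PB by blast
    ultimately obtain r2 w where r2: "strict_mono r2" "((\<lambda>n. P (y n)) \<circ> r2) \<longlonglongrightarrow> w"
      using finite_span_boundedly_compact[OF B, unfolded boundedly_compact_def, rule_format,
          of "\<lambda>n. P (y n)"] by blast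
    have "(\<lambda>n. \<phi> (r (r2 n)) w) \<longlonglongrightarrow> 0"
      using LIMSEQ_subseq_LIMSEQ[OF null[unfolded weak_star_null_def, rule_format, of w]
          strict_mono_o[OF r(1) r2(1)]] by (simp add: o_def)
    then have "(\<lambda>n. \<phi> (r (r2 n)) (P (y (r2 n)))) \<longlonglongrightarrow> 0"
      using equibounded_null_along_convergent[where \<phi> = "\<lambda>n. \<phi> (r (r2 n))", OF M _ r2(2)[unfolded o_def]]
      by blast
    from order_tendstoD(2)[OF tendsto_rabs_zero[OF this], of "e / 2"] e
    obtain N where "\<forall>n\<ge>N. \<bar>\<phi> (r (r2 n)) (P (y (r2 n)))\<bar> < e / 2"
      by (auto simp: eventually_sequentially)
    then show False using y(2)[of "r2 N"] by force
  qed
next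
  fix a :: real assume "a < 0"
  then show "\<forall>\<^sub>F n in sequentially. a < norm (\<phi> n o\<^sub>L P)"
    by (intro always_eventually allI) (rule less_le_trans[OF _ norm_ge_zero])
qed

section \<open>Part (i): shrinking 1-unconditional decompositions\<close>

definition fdd_partial :: "(nat \<Rightarrow> ('a::real_normed_vector \<Rightarrow>\<^sub>L 'a)) \<Rightarrow> nat \<Rightarrow> 'a \<Rightarrow>\<^sub>L 'a" where
  "fdd_partial Q N = (\<Sum>j<N. Q j)"

lemma fdd_partial_apply: "fdd_partial Q N y = (\<Sum>j<N. Q j y)"
  unfolding fdd_partial_def by (simp add: blinfun.sum_left)

lemma fdd_projection_apply:
  assumes "is_FDD Q"
  shows "Q i (Q j y) = (if i = j then Q j y else 0)"
proof -
  have "Q j o\<^sub>L Q j = Q j" "i \<noteq> j \<Longrightarrow> Q i o\<^sub>L Q j = 0" using assms unfolding is_FDD_def by blast+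
  from this[THEN arg_cong[where f = "\<lambda>T. blinfun_apply T y"]] show ?thesis by auto
qed

lemma fdd_partial_idem:
  assumes "is_FDD Q"
  shows "fdd_partial Q N (fdd_partial Q N y) = fdd_partial Q N y"
  by (simp add: fdd_partial_apply blinfun.sum_right fdd_projection_apply[OF assms])

lemma fdd_partial_tendsto:
  assumes "is_FDD Q"
  shows "(\<lambda>N. fdd_partial Q N y) \<longlonglongrightarrow> y"
  using assms unfolding is_FDD_def sums_def by (simp add: fdd_partial_apply)

lemma fdd_partial_finite_rank:
  assumes "is_FDD Q"
  shows "\<exists>B. finite B \<and> (\<forall>y. fdd_partial Q N y \<in> span B)"
proof -
  have "\<forall>j. \<exists>B. finite B \<and> range (blinfun_apply (Q j)) \<subseteq> span B"
    using assms unfolding is_FDD_def by blast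
  from choice[OF this] obtain Bs
    where Bs: "\<And>j. finite (Bs j)" "\<And>j. range (blinfun_apply (Q j)) \<subseteq> span (Bs j)" by blast
  have "Q j y \<in> span (\<Union>j<N. Bs j)" if "j < N" for j y
  proof -
    have "span (Bs j) \<subseteq> span (\<Union>j<N. Bs j)" using that by (intro span_mono) auto
    then show ?thesis using Bs(2)[of j] by blast
  qed
  then have "fdd_partial Q N y \<in> span (\<Union>j<N. Bs j)" for y
    unfolding fdd_partial_apply by (intro span_sum) auto
  then show ?thesis using Bs(1) by blast
qed

lemma separable_space_euclidean_iff:
  "separable_space (euclidean :: 'a::metric_space topology) \<longleftrightarrow> (\<exists>C::'a set. countable C \<and> closure C = UNIV)"
  unfolding separable_space_def by auto

text \<open>A space with a finite-dimensional decomposition is separable: it is the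
  closure of the union of the separable finite-dimensional ranges of the partial sums.\<close>

lemma fdd_separable:
  fixes Q :: "nat \<Rightarrow> ('a::real_normed_vector \<Rightarrow>\<^sub>L 'a)"
  assumes "is_FDD Q"
  shows "separable_space (euclidean :: 'a topology)"
proof -
  have "\<exists>C. countable C \<and> range (fdd_partial Q N) \<subseteq> closure C" for N
  proof -
    obtain B where "finite B" "\<forall>y. fdd_partial Q N y \<in> span B"
      using fdd_partial_finite_rank[OF assms] by blast
    moreover obtain C where "countable C" "span B \<subseteq> closure C"
      using finite_span_separable[OF \<open>finite B\<close>] by blast
    ultimately show ?thesis by blast
  qed
  then have "\<forall>N. \<exists>C. countable C \<and> range (fdd_partial Q N) \<subseteq> closure C" by blast
  from choice[OF this] obtain C
    where C: "\<And>N. countable (C N)" "\<And>N. range (fdd_partial Q N) \<subseteq> closure (C N)" by blast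
  have "y \<in> closure (\<Union>N. C N)" for y
  proof (rule closed_sequentially[OF closed_closure _ fdd_partial_tendsto[OF assms]])
    show "fdd_partial Q N y \<in> closure (\<Union>N. C N)" for N
    proof -
      have "closure (C N) \<subseteq> closure (\<Union>N. C N)" by (intro closure_mono) auto
      then show ?thesis using C(2)[of N] by blast
    qed
  qed
  then have "closure (\<Union>N. C N) = UNIV" by blast
  moreover have "countable (\<Union>N. C N)" using C(1) by blast
  ultimately show ?thesis unfolding separable_space_euclidean_iff by blast
qed

text \<open>1-unconditionality makes the reflection \<open>2 P\<^sub>N - I\<close> a contraction: it
  changes the signs of the blocks of index at least \<open>N\<close>.\<close>

lemma fdd_reflection_norm:
  assumes fdd: "is_FDD Q" and unc: "is_1UFDD Q"
  shows "norm (2 *\<^sub>R fdd_partial Q N y - y) \<le> norm y"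
proof -
  define \<epsilon> :: "nat \<Rightarrow> real" where "\<epsilon> j = (if j < N then 1 else -1)" for j
  have signs: "norm (\<Sum>j<n. \<epsilon> j *\<^sub>R Q j y) \<le> norm y" for n
    using unc unfolding is_1UFDD_def \<epsilon>_def by auto
  have tail: "(\<Sum>j<n. \<epsilon> j *\<^sub>R Q j y) = 2 *\<^sub>R fdd_partial Q N y - fdd_partial Q n y" if "N \<le> n" for n
  proof -
    have "(\<Sum>j<n. \<epsilon> j *\<^sub>R Q j y) = (\<Sum>j<n. 2 *\<^sub>R (if j < N then Q j y else 0) - Q j y)"
      by (intro sum.cong) (auto simp: \<epsilon>_def scaleR_2)
    also have "\<dots> = 2 *\<^sub>R (\<Sum>j\<in>{..<n} \<inter> {..<N}. Q j y) - fdd_partial Q n y"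
      by (simp add: sum_subtractf scaleR_sum_right fdd_partial_apply sum.inter_restrict)
    also have "{..<n} \<inter> {..<N} = {..<N}" using that by auto
    finally show ?thesis by (simp add: fdd_partial_apply)
  qed
  have "\<forall>\<^sub>F n in sequentially. norm (2 *\<^sub>R fdd_partial Q N y - fdd_partial Q n y) \<le> norm y"
    using signs tail unfolding eventually_sequentially by (intro exI[of _ N]) metis
  moreover have "(\<lambda>n. norm (2 *\<^sub>R fdd_partial Q N y - fdd_partial Q n y)) \<longlonglongrightarrow> norm (2 *\<^sub>R fdd_partial Q N y - y)"
    using fdd_partial_tendsto[OF fdd] by (intro tendsto_intros)
  ultimately show ?thesis by (intro tendsto_upperbound) auto
qed

text \<open>Dually, the reflection exchanges \<open>a + b\<close> and \<open>a - b\<close> whenever \<open>a\<close> factors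
  through \<open>P\<^sub>N\<close> and \<open>b\<close> vanishes on its range; hence these have equal norms.\<close>

lemma fdd_dual_symmetry:
  fixes a b :: "'a::real_normed_vector \<Rightarrow>\<^sub>L real"
  assumes fdd: "is_FDD Q" and unc: "is_1UFDD Q"
    and a: "a o\<^sub>L fdd_partial Q N = a" and b: "b o\<^sub>L fdd_partial Q N = 0"
  shows "norm (a + b) = norm (a - b)"
proof -
  define R where "R = 2 *\<^sub>R fdd_partial Q N - id_blinfun"
  have contraction: "norm (f o\<^sub>L R) \<le> norm f" for f :: "'a \<Rightarrow>\<^sub>L real"
  proof (rule norm_blinfun_bound)
    fix y
    have "norm (f (R y)) \<le> norm f * norm (R y)" by (rule norm_blinfun)
    also have "\<dots> \<le> norm f * norm y"
      using fdd_reflection_norm[OF fdd unc, of N y]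
      by (intro mult_left_mono) (auto simp: R_def blinfun.diff_left blinfun.scaleR_left)
    finally show "norm ((f o\<^sub>L R) y) \<le> norm f * norm y" by simp
  qed simp
  have aP: "a (fdd_partial Q N y) = a y" and bP: "b (fdd_partial Q N y) = 0" for y
    using a b by (metis blinfun_apply_blinfun_compose, metis blinfun_apply_blinfun_compose zero_blinfun.rep_eq)
  have "(a + b) o\<^sub>L R = a - b" "(a - b) o\<^sub>L R = a + b"
    by (auto intro!: blinfun_eqI simp: R_def aP bP blinfun.diff_left blinfun.add_left
        blinfun.scaleR_left blinfun.diff_right blinfun.scaleR_right)
  then show ?thesis using contraction[of "a + b"] contraction[of "a - b"] by simp
qed

lemma shrinking_partial_tendsto:
  fixes xs :: "'a::real_normed_vector \<Rightarrow>\<^sub>L real"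
  assumes "is_shrinking Q"
  shows "(\<lambda>N. xs o\<^sub>L fdd_partial Q N) \<longlonglongrightarrow> xs"
proof -
  have "(\<Sum>j<N. xs o\<^sub>L Q j) = xs o\<^sub>L fdd_partial Q N" for N
    by (rule blinfun_eqI) (simp add: fdd_partial_apply blinfun.sum_left blinfun.sum_right)
  moreover have "(\<lambda>N. \<Sum>j<N. xs o\<^sub>L Q j) \<longlonglongrightarrow> xs"
    using assms unfolding is_shrinking_def sums_def by blast
  ultimately show ?thesis by simp
qed

lemma norm_plus_minus_perturbation:
  fixes x y a b :: "'a::real_normed_vector"
  shows "\<bar>(norm (x + y) - norm (x - y)) - (norm (a + b) - norm (a - b))\<bar> \<le> 2 * (norm (x - a) + norm (y - b))"
proof -
  have "\<bar>norm (x + y) - norm (a + b)\<bar> \<le> norm (x - a) + norm (y - b)"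
    using norm_triangle_ineq3[of "x + y" "a + b"] norm_triangle_ineq[of "x - a" "y - b"]
    by (simp add: algebra_simps)
  moreover have "\<bar>norm (x - y) - norm (a - b)\<bar> \<le> norm (x - a) + norm (y - b)"
    using norm_triangle_ineq3[of "x - y" "a - b"] norm_triangle_ineq4[of "x - a" "y - b"]
    by (simp add: algebra_simps)
  ultimately show ?thesis by (auto simp: abs_le_iff)
qed

text \<open>Approximate \<open>x*\<close> by \<open>x* \<circ> P\<^sub>N\<close> and split \<open>x\<^sub>n* = x\<^sub>n* \<circ> P\<^sub>N + (x\<^sub>n* - x\<^sub>n* \<circ> P\<^sub>N)\<close>;
  the symmetric pair has zero defect, and the errors are small for large \<open>N\<close> and \<open>n\<close>.\<close>

theorem au_star_shrinking_1UFDD: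
  fixes Q :: "nat \<Rightarrow> ('x::banach \<Rightarrow>\<^sub>L 'x)"
  assumes fdd: "is_FDD Q" and unc: "is_1UFDD Q" and shr: "is_shrinking Q"
  shows "au_star TYPE('x)"
  unfolding au_star_def
proof (intro conjI allI impI fdd_separable[OF fdd])
  fix xs :: "'x \<Rightarrow>\<^sub>L real" and xn :: "nat \<Rightarrow> ('x \<Rightarrow>\<^sub>L real)"
  assume null: "weak_star_null xn"
  obtain M where M: "\<And>n. norm (xn n) \<le> M" using weak_star_null_bounded[OF null] by blast
  let ?P = "fdd_partial Q"
  show "(\<lambda>n. norm (xs + xn n) - norm (xs - xn n)) \<longlonglongrightarrow> 0"
  proof (rule LIMSEQ_I)
    fix e :: real assume "e > 0"
    then obtain N0 where "\<forall>N\<ge>N0. norm ((xs o\<^sub>L ?P N) - xs) < e / 4"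
      using LIMSEQ_D[OF shrinking_partial_tendsto[OF shr, of xs], of "e / 4"] by auto
    then have N: "norm (xs - (xs o\<^sub>L ?P N0)) < e / 4" by (simp add: norm_minus_commute)
    obtain B where "finite B" "\<And>y. ?P N0 y \<in> span B" using fdd_partial_finite_rank[OF fdd] by blast
    from LIMSEQ_D[OF finite_rank_weak_star_null[OF this null M], of "e / 4"] \<open>e > 0\<close>
    obtain n0 where n0: "\<forall>n\<ge>n0. norm (xn n o\<^sub>L ?P N0) < e / 4" by auto
    have "\<bar>norm (xs + xn n) - norm (xs - xn n)\<bar> < e" if "n \<ge> n0" for n
    proof -
      define a where "a = xs o\<^sub>L ?P N0"
      define b where "b = xn n - (xn n o\<^sub>L ?P N0)"
      have "a o\<^sub>L ?P N0 = a" "b o\<^sub>L ?P N0 = 0"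
        by (auto intro!: blinfun_eqI simp: a_def b_def blinfun.diff_left fdd_partial_idem[OF fdd])
      then have "norm (a + b) = norm (a - b)" by (rule fdd_dual_symmetry[OF fdd unc])
      moreover have "xn n - b = xn n o\<^sub>L ?P N0" by (simp add: b_def)
      ultimately show ?thesis
        using norm_plus_minus_perturbation[of xs "xn n" a b] N n0[rule_format, OF that]
        unfolding a_def by simp
    qed
    then show "\<exists>n0. \<forall>n\<ge>n0. norm (norm (xs + xn n) - norm (xs - xn n) - 0) < e" by auto
  qed
qed

section \<open>Part (ii): subspaces and quotients\<close>

lemma weak_star_null_subseq:
  assumes "weak_star_null t" "strict_mono r"
  shows "weak_star_null (\<lambda>n. t (r n))"
  using assms LIMSEQ_subseq_LIMSEQ unfolding weak_star_null_def o_def by blast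

lemma weak_star_null_uminus:
  assumes "weak_star_null t"
  shows "weak_star_null (\<lambda>n. - t n)"
  unfolding weak_star_null_def
proof
  fix x
  have "(\<lambda>n. t n x) \<longlonglongrightarrow> 0" using assms unfolding weak_star_null_def by blast
  from tendsto_minus[OF this] show "(\<lambda>n. (- t n) x) \<longlonglongrightarrow> 0" by (simp add: blinfun.minus_left)
qed

lemma quotient_dual_isometry:
  fixes q :: "'y::real_normed_vector \<Rightarrow>\<^sub>L 'q::real_normed_vector" and f :: "'q \<Rightarrow>\<^sub>L real"
  assumes surj: "surj (blinfun_apply q)" and kernel: "{y. q y = 0} = Z"
    and quotient_norm: "\<And>y. norm (q y) = infdist y Z"
  shows "norm (f o\<^sub>L q) = norm f"
proof (rule antisym)
  have "0 \<in> Z" using kernel by auto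
  have "norm q \<le> 1"
    using quotient_norm infdist_le[OF \<open>0 \<in> Z\<close>] by (intro norm_blinfun_bound) auto
  then show "norm (f o\<^sub>L q) \<le> norm f"
    using norm_blinfun_compose[of f q] mult_left_mono[of "norm q" 1 "norm f"] by simp
  show "norm f \<le> norm (f o\<^sub>L q)"
  proof (rule norm_blinfun_bound)
    fix w
    obtain y where y: "q y = w" using surj by (metis surjD)
    let ?K = "norm (f o\<^sub>L q)"
    have lifts: "\<bar>f w\<bar> \<le> ?K * dist y z" if "z \<in> Z" for z
    proof -
      have "f w = (f o\<^sub>L q) (y - z)" using that kernel y by (auto simp: blinfun.diff_right)
      then show ?thesis using norm_blinfun[of "f o\<^sub>L q" "y - z"] by (simp add: dist_norm)
    qed
    show "norm (f w) \<le> ?K * norm w"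
    proof (cases "?K = 0")
      case True
      then show ?thesis using lifts[OF \<open>0 \<in> Z\<close>] by simp
    next
      case False
      then have "?K > 0" by simp
      have "\<bar>f w\<bar> / ?K \<le> infdist y Z"
        unfolding infdist_notempty[OF ex_in_conv[THEN iffD1, OF exI[of _ 0], OF \<open>0 \<in> Z\<close>]]
        using lifts \<open>?K > 0\<close> \<open>0 \<in> Z\<close> by (intro cINF_greatest) (auto simp: field_simps mult.commute)
      then show ?thesis using \<open>?K > 0\<close> quotient_norm[of y] y by (simp add: field_simps)
    qed
  qed simp
qed

text \<open>Part (ii), quotients: the (au*) defect of \<open>x*, x\<^sub>n*\<close> equals that of \<open>x* \<circ> q, x\<^sub>n* \<circ> q\<close>
  in \<open>Y*\<close>, and separability passes to continuous images.\<close>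

theorem au_star_quotient:
  fixes q :: "'y::banach \<Rightarrow>\<^sub>L 'q::banach"
  assumes au: "au_star TYPE('y)" and surj: "surj (blinfun_apply q)" and kernel: "{y. q y = 0} = Z"
    and quotient_norm: "\<And>y. norm (q y) = infdist y Z"
  shows "au_star TYPE('q)"
  unfolding au_star_def
proof (intro conjI allI impI)
  have "continuous_map euclidean euclidean (blinfun_apply q)"
    by (simp add: linear_continuous_on blinfun.bounded_linear_right)
  moreover have "separable_space (euclidean :: 'y topology)" using au unfolding au_star_def by blast
  ultimately show "separable_space (euclidean :: 'q topology)"
    using separable_space_continuous_map_image[of euclidean euclidean "blinfun_apply q"] surj by simp
next
  fix xs :: "'q \<Rightarrow>\<^sub>L real" and xn :: "nat \<Rightarrow> ('q \<Rightarrow>\<^sub>L real)"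
  assume "weak_star_null xn"
  then have "weak_star_null (\<lambda>n. xn n o\<^sub>L q)" unfolding weak_star_null_def by simp
  then have "(\<lambda>n. norm ((xs o\<^sub>L q) + (xn n o\<^sub>L q)) - norm ((xs o\<^sub>L q) - (xn n o\<^sub>L q))) \<longlonglongrightarrow> 0"
    using au unfolding au_star_def by blast
  moreover have "(xs o\<^sub>L q) + (xn n o\<^sub>L q) = (xs + xn n) o\<^sub>L q"
    and "(xs o\<^sub>L q) - (xn n o\<^sub>L q) = (xs - xn n) o\<^sub>L q" for n
    by (auto intro!: blinfun_eqI simp: blinfun.add_left blinfun.diff_left)
  ultimately have "(\<lambda>n. norm ((xs + xn n) o\<^sub>L q) - norm ((xs - xn n) o\<^sub>L q)) \<longlonglongrightarrow> 0" by simp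
  then show "(\<lambda>n. norm (xs + xn n) - norm (xs - xn n)) \<longlonglongrightarrow> 0"
    by (simp add: quotient_dual_isometry[OF surj kernel quotient_norm])
qed

lemma separable_isometric_domain:
  fixes f :: "'a::metric_space \<Rightarrow> 'b::metric_space"
  assumes iso: "\<And>a b. dist (f a) (f b) = dist a b"
    and sep: "separable_space (euclidean :: 'b topology)"
  shows "separable_space (euclidean :: 'a topology)"
proof -
  obtain C :: "'b set" where C: "countable C" "closure C = UNIV"
    using sep unfolding separable_space_euclidean_iff by blast
  define I where "I = {(c, k). c \<in> C \<and> (\<exists>s. dist (f s) c < inverse (real (Suc k)))}"
  define sel where "sel = (\<lambda>(c, k). SOME s. dist (f s) c < inverse (real (Suc k)))"
  have "countable I" using C(1) unfolding I_def by (rule countable_subset[rotated, OF countable_SIGMA]) auto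
  moreover have "s \<in> closure (sel ` I)" for s
    unfolding closure_approachable
  proof (intro allI impI)
    fix e :: real assume "e > 0"
    then obtain k where k: "inverse (real (Suc k)) < e / 2"
      using reals_Archimedean[of "e / 2"] by auto
    have "f s \<in> closure C" using C by simp
    moreover have "inverse (real (Suc k)) > 0" by simp
    ultimately obtain c where c: "c \<in> C" "dist c (f s) < inverse (real (Suc k))"
      unfolding closure_approachable by blast
    then have "(c, k) \<in> I" unfolding I_def by (auto simp: dist_commute)
    have "dist (f (sel (c, k))) c < inverse (real (Suc k))"
      using \<open>(c, k) \<in> I\<close> unfolding sel_def I_def by (auto intro: someI)
    then have "dist (sel (c, k)) s < e"
      using iso[of "sel (c, k)" s] dist_triangle[of "f (sel (c, k))" "f s" c] c(2) k by linarith
    then show "\<exists>y\<in>sel ` I. dist y s < e" using \<open>(c, k) \<in> I\<close> by blast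
  qed
  ultimately show ?thesis unfolding separable_space_euclidean_iff by blast
qed

text \<open>Property (au*) follows from its one-sided version, applied to \<open>x\<^sub>n*\<close> and \<open>-x\<^sub>n*\<close>.\<close>

lemma au_from_one_sided:
  fixes xs :: "'a::real_normed_vector \<Rightarrow>\<^sub>L real"
  assumes one_sided: "\<And>t e. weak_star_null t \<Longrightarrow> e > 0 \<Longrightarrow>
      \<forall>\<^sub>F n in sequentially. - e < norm (xs + t n) - norm (xs - t n)"
    and null: "weak_star_null xn"
  shows "(\<lambda>n. norm (xs + xn n) - norm (xs - xn n)) \<longlonglongrightarrow> 0"
proof (rule order_tendstoI)
  fix e :: real assume "e < 0"
  then show "\<forall>\<^sub>F n in sequentially. e < norm (xs + xn n) - norm (xs - xn n)"
    using one_sided[OF null, of "- e"] by simp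
next
  fix e :: real assume "e > 0"
  from one_sided[OF weak_star_null_uminus[OF null] this]
  show "\<forall>\<^sub>F n in sequentially. norm (xs + xn n) - norm (xs - xn n) < e"
    by (simp add: eventually_mono)
qed

text \<open>Extend \<open>x*\<close> and \<open>x* + t\<^sub>n\<close> norm-preservingly
  to \<open>g\<close> and \<open>h\<^sub>n\<close> on \<open>Y\<close>, and let \<open>L\<close> be a weak* cluster point of \<open>h\<^sub>n - g\<close>; it
  vanishes on \<open>X\<close>.  Then \<open>G = g + L\<close> and \<open>w\<^sub>n = h\<^sub>n - g - L\<close> (along a subsequence) form
  a weak*-null perturbation in \<open>Y*\<close> whose defect is dominated by that of \<open>x*, t\<^sub>n\<close>.\<close>

lemma isometric_subspace_dominating_sequence:
  fixes T :: "'s::banach \<Rightarrow>\<^sub>L 'y::banach" and xs :: "'s \<Rightarrow>\<^sub>L real"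
  assumes iso: "\<And>x. norm (T x) = norm x"
    and sep: "separable_space (euclidean :: 'y topology)" and null: "weak_star_null t"
  shows "\<exists>r (G::'y \<Rightarrow>\<^sub>L real) w. strict_mono r \<and> weak_star_null w \<and>
           (\<forall>n. norm (G + w n) - norm (G - w n) \<le> norm (xs + t (r n)) - norm (xs - t (r n)))"
proof -
  obtain M where M: "\<And>n. norm (t n) \<le> M" using weak_star_null_bounded[OF null] by blast
  obtain g where g: "g o\<^sub>L T = xs" "norm g \<le> norm xs"
    using isometry_functional_extension[OF iso] by blast
  have "\<forall>n. \<exists>h. h o\<^sub>L T = xs + t n \<and> norm h \<le> norm (xs + t n)"
    using isometry_functional_extension[OF iso] by blast
  from choice[OF this] obtain h where h: "\<And>n. h n o\<^sub>L T = xs + t n" "\<And>n. norm (h n) \<le> norm (xs + t n)"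
    by blast
  have "norm (h n - g) \<le> 2 * norm xs + M" for n
    using norm_triangle_ineq4[of "h n" g] h(2)[of n] norm_triangle_ineq[of xs "t n"] M[of n] g(2)
    by linarith
  moreover obtain C :: "'y set" where "countable C" "closure C = UNIV"
    using sep unfolding separable_space_euclidean_iff by blast
  ultimately obtain r and L :: "'y \<Rightarrow>\<^sub>L real"
    where r: "strict_mono r" "\<And>y. (\<lambda>n. (h (r n) - g) y) \<longlonglongrightarrow> L y"
    using sequential_banach_alaoglu[of C "\<lambda>n. h n - g"] by blast
  have hT: "(h n - g) (T s) = t n s" for n s
    using h(1)[of n, THEN arg_cong[where f = "\<lambda>F. blinfun_apply F s"]]
      g(1)[THEN arg_cong[where f = "\<lambda>F. blinfun_apply F s"]]
    by (simp add: blinfun.diff_left blinfun.add_left)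
  have LT: "L (T s) = 0" for s
    using r(2)[of "T s"] LIMSEQ_subseq_LIMSEQ[OF null[unfolded weak_star_null_def, rule_format, of s] r(1)]
    by (simp add: hT o_def LIMSEQ_unique)
  define w where "w n = h (r n) - g - L" for n
  have "weak_star_null w"
    unfolding weak_star_null_def w_def
    using r(2) by (simp add: blinfun.diff_left LIM_zero)
  moreover have "norm ((g + L) + w n) - norm ((g + L) - w n) \<le> norm (xs + t (r n)) - norm (xs - t (r n))" for n
  proof -
    have "((g + L) - w n) o\<^sub>L T = xs - t (r n)"
      by (rule blinfun_eqI) (simp add: w_def blinfun.diff_left blinfun.add_left hT[symmetric] LT
          g(1)[symmetric] algebra_simps)
    then have "norm (xs - t (r n)) \<le> norm ((g + L) - w n)"
      using norm_compose_isometry_le[OF iso] by metis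
    moreover have hw: "(g + L) + w n = h (r n)" by (simp add: w_def)
    ultimately show ?thesis using h(2)[of "r n"] unfolding hw by linarith
  qed
  ultimately show ?thesis using r(1) by blast
qed

text \<open>If the one-sided estimate failed along a subsequence, the dominating
  sequence in \<open>Y*\<close> would contradict (au*) for \<open>Y\<close>.\<close>

theorem au_star_isometric_subspace:
  fixes T :: "'s::banach \<Rightarrow>\<^sub>L 'y::banach"
  assumes au: "au_star TYPE('y)" and iso: "\<And>x. norm (T x) = norm x"
  shows "au_star TYPE('s)"
proof -
  have sep: "separable_space (euclidean :: 'y topology)" using au unfolding au_star_def by blast
  have "dist (T a) (T b) = dist a b" for a b
    using iso[of "a - b"] by (simp add: dist_norm blinfun.diff_right)
  then have "separable_space (euclidean :: 's topology)"
    using separable_isometric_domain[OF _ sep] by blast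
  moreover have "\<forall>\<^sub>F n in sequentially. - e < norm (xs + t n) - norm (xs - t n)"
    if null: "weak_star_null t" and "e > 0" for xs :: "'s \<Rightarrow>\<^sub>L real" and t e
  proof (rule ccontr)
    assume "\<not> ?thesis"
    from not_eventually_sequentiallyD[OF this] obtain r :: "nat \<Rightarrow> nat"
      where r: "strict_mono r" "\<And>n. norm (xs + t (r n)) - norm (xs - t (r n)) \<le> - e"
      by (auto simp: not_less)
    obtain r2 and G :: "'y \<Rightarrow>\<^sub>L real" and w where r2: "weak_star_null w"
      "\<And>n. norm (G + w n) - norm (G - w n) \<le> norm (xs + t (r (r2 n))) - norm (xs - t (r (r2 n)))"
      using isometric_subspace_dominating_sequence[OF iso sep weak_star_null_subseq[OF null r(1)], of xs]
      by blast
    have "(\<lambda>n. norm (G + w n) - norm (G - w n)) \<longlonglongrightarrow> 0" using au r2(1) unfolding au_star_def by blast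
    from order_tendstoD(1)[OF this, of "- e"] \<open>e > 0\<close>
    obtain n where "- e < norm (G + w n) - norm (G - w n)" by (auto dest: eventually_happens)
    then show False using r2(2)[of n] r(2)[of "r2 n"] by linarith
  qed
  ultimately show ?thesis unfolding au_star_def using au_from_one_sided by blast
qed

text \<open>A closed subspace is given through an isometric embedding \<open>T\<close> onto it, a quotient
  through a surjection \<open>q\<close> carrying the quotient norm; the three claims are parts (i)
  and (ii) proved above.\<close>

theorem proposition2p4:
  shows "(\<forall>Q :: nat \<Rightarrow> ('x::banach \<Rightarrow>\<^sub>L 'x).
            is_FDD Q \<and> is_1UFDD Q \<and> is_shrinking Q \<longrightarrow> au_star TYPE('x))
       \<and> (au_star TYPE('y::banach) \<longrightarrow>
            (\<forall>(X::'y set) (T::'s::banach \<Rightarrow>\<^sub>L 'y).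
               closed X \<and> subspace X \<and> range (blinfun_apply T) = X \<and>
               (\<forall>x. norm (T x) = norm x) \<longrightarrow> au_star TYPE('s))
          \<and> (\<forall>(Z::'y set) (q::'y \<Rightarrow>\<^sub>L 'q::banach).
               closed Z \<and> subspace Z \<and> surj (blinfun_apply q) \<and>
               {y. q y = 0} = Z \<and> (\<forall>y. norm (q y) = infdist y Z) \<longrightarrow> au_star TYPE('q)))"
proof (intro conjI allI impI)
  fix Q :: "nat \<Rightarrow> ('x \<Rightarrow>\<^sub>L 'x)"
  assume "is_FDD Q \<and> is_1UFDD Q \<and> is_shrinking Q"
  then show "au_star TYPE('x)" using au_star_shrinking_1UFDD by blast
next
  fix X :: "'y set" and T :: "'s \<Rightarrow>\<^sub>L 'y"
  assume "au_star TYPE('y)"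
    and "closed X \<and> subspace X \<and> range (blinfun_apply T) = X \<and> (\<forall>x. norm (T x) = norm x)"
  then show "au_star TYPE('s)" using au_star_isometric_subspace by blast
next
  fix Z :: "'y set" and q :: "'y \<Rightarrow>\<^sub>L 'q"
  assume "au_star TYPE('y)"
    and "closed Z \<and> subspace Z \<and> surj (blinfun_apply q) \<and> {y. q y = 0} = Z \<and> (\<forall>y. norm (q y) = infdist y Z)"
  then show "au_star TYPE('q)" using au_star_quotient by blast
qed

end
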